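(* Let $R$ be a commutative ring, $S$ a multiplicative subset of $R$, and $M$ an $R$-module. The following are equivalent: (1) $M$ is uniformly $S$-Noetherian; (2) there exists $s\in S$ such that every ascending chain $M_1\subseteq M_2\subseteq\cdots$ of submodules of $M$ is stationary with respect to $s$, i.e. there is $k\ge 1$ with $sM_n\subseteq M_k$ for all $n\ge k$; (3) there exists $s\in S$ such that every nonempty family $\mathcal F$ of submodules of $M$ has a maximal element with respect to $s$, i.e. some $M_0\in\mathcal F$ such that $sN\subseteq M_0$ for every $N\in\mathcal F$ with $M_0\subseteq N$.
   Context: All rings are commutative with identity; a multiplicative subset $S$ contains $1$ and is closed under multiplication. An $R$-module $M$ is uniformly $S$-Noetherian ($u$-$S$-Noetherian) if there exists a single $s\in S$ such that for every submodule $N$ of $M$ there is a finitely generated submodule $F\subseteq N$ with $sN\subseteq F$. A ring is $u$-$S$-Noetherian if it is so as a module over itself. *)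

theory Defs
  imports "HOL.Modules"
begin

text \<open>An R-module is represented by the library locale module scale,
  where R is a type of class comm_ring_1 and M is the whole carrier type 'b.\<close>

definition mult_subset :: "'a::comm_ring_1 set \<Rightarrow> bool" where
  "mult_subset S \<longleftrightarrow> 1 \<in> S \<and> (\<forall>a\<in>S. \<forall>b\<in>S. a * b \<in> S)"

definition u_S_noetherian ::
  "('a::comm_ring_1 \<Rightarrow> 'b::ab_group_add \<Rightarrow> 'b) \<Rightarrow> 'a set \<Rightarrow> bool" where
  "u_S_noetherian scale S \<longleftrightarrow>
     (\<exists>s\<in>S. \<forall>N. module.subspace scale N \<longrightarrow>
        (\<exists>G. finite G \<and> module.span scale G \<subseteq> N \<and> scale s ` N \<subseteq> module.span scale G))"

definition S_stationary_chains ::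
  "('a::comm_ring_1 \<Rightarrow> 'b::ab_group_add \<Rightarrow> 'b) \<Rightarrow> 'a set \<Rightarrow> bool" where
  "S_stationary_chains scale S \<longleftrightarrow>
     (\<exists>s\<in>S. \<forall>Ms :: nat \<Rightarrow> 'b set.
        (\<forall>n. module.subspace scale (Ms n)) \<longrightarrow> (\<forall>n. Ms n \<subseteq> Ms (Suc n)) \<longrightarrow>
        (\<exists>k. \<forall>n\<ge>k. scale s ` Ms n \<subseteq> Ms k))"

definition S_maximal_families ::
  "('a::comm_ring_1 \<Rightarrow> 'b::ab_group_add \<Rightarrow> 'b) \<Rightarrow> 'a set \<Rightarrow> bool" where
  "S_maximal_families scale S \<longleftrightarrow>
     (\<exists>s\<in>S. \<forall>F :: 'b set set.
        F \<noteq> {} \<longrightarrow> (\<forall>N\<in>F. module.subspace scale N) \<longrightarrow>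
        (\<exists>M0\<in>F. \<forall>N\<in>F. M0 \<subseteq> N \<longrightarrow> scale s ` N \<subseteq> M0))"

end

theory Submission
  imports Defs
begin

text \<open>All three conditions hold for one and the same witness \<open>s\<close>, so each implication is proved
  for a fixed \<open>s\<close>. The union of a chain of
  submodules is a submodule; if \<open>s\<close> times it lies in the span of a finite set \<open>G\<close> of its
  elements, then \<open>G\<close> already lies in some member of the chain. A family without an
  \<open>s\<close>-maximal element yields, by dependent choice, a chain that never becomes \<open>s\<close>-stationary.
  Finally, an \<open>s\<close>-maximal element \<open>span G\<^sub>0\<close> among the finitely generated submodules of \<open>N\<close>
  contains \<open>s x\<close> for every \<open>x \<in> N\<close>, since \<open>span (insert x G\<^sub>0)\<close> is a larger candidate.\<close>

lemma subset_chain_range_mono: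
  assumes "mono (Ms :: nat \<Rightarrow> 'a set)"
  shows "subset.chain UNIV (range Ms)"
proof -
  have "Ms m \<subseteq> Ms n \<or> Ms n \<subseteq> Ms m" for m n
    using assms by (metis monoD nle_le)
  then show ?thesis
    unfolding subset.chain_def by blast
qed

lemma finite_subset_UN_mono:
  assumes "mono (Ms :: nat \<Rightarrow> 'a set)" "finite G" "G \<subseteq> (\<Union>n. Ms n)"
  obtains k where "G \<subseteq> Ms k"
  using finite_subset_Union_chain[OF assms(2,3) _ subset_chain_range_mono[OF assms(1)]]
  by blast

context module
begin

lemma subspace_Union_chain:
  assumes "C \<noteq> {}" "subset.chain A C" "\<And>X. X \<in> C \<Longrightarrow> subspace X"
  shows "subspace (\<Union>C)"
  unfolding subspace_def
proof (intro conjI ballI allI)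
  show "0 \<in> \<Union>C"
    using assms(1,3) subspace_0 by blast
  fix x y
  assume "x \<in> \<Union>C" "y \<in> \<Union>C"
  then obtain X Y where XY: "X \<in> C" "Y \<in> C" "x \<in> X" "y \<in> Y"
    by blast
  have "X \<subseteq> Y \<or> Y \<subseteq> X"
    using assms(2) XY(1,2) unfolding subset.chain_def by blast
  then have "x + y \<in> X \<or> x + y \<in> Y"
    using assms(3)[OF XY(1)] assms(3)[OF XY(2)] XY(3,4) subspace_add by blast
  then show "x + y \<in> \<Union>C"
    using XY(1,2) by blast
next
  fix c x
  assume "x \<in> \<Union>C"
  then show "c *s x \<in> \<Union>C"
    using assms(3) subspace_scale by blast
qed

lemma subspace_UN_mono:
  fixes Ms :: "nat \<Rightarrow> 'b set"
  assumes "mono Ms" "\<And>n. subspace (Ms n)"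
  shows "subspace (\<Union>n. Ms n)"
  by (rule subspace_Union_chain[OF _ subset_chain_range_mono[OF assms(1)]]) (use assms(2) in auto)

definition uniformly_fg_wrt :: "'a \<Rightarrow> bool" where
  "uniformly_fg_wrt s \<longleftrightarrow>
     (\<forall>N. subspace N \<longrightarrow> (\<exists>G. finite G \<and> span G \<subseteq> N \<and> scale s ` N \<subseteq> span G))"

definition stationary_chains_wrt :: "'a \<Rightarrow> bool" where
  "stationary_chains_wrt s \<longleftrightarrow>
     (\<forall>Ms :: nat \<Rightarrow> 'b set. (\<forall>n. subspace (Ms n)) \<longrightarrow> (\<forall>n. Ms n \<subseteq> Ms (Suc n)) \<longrightarrow>
        (\<exists>k. \<forall>n\<ge>k. scale s ` Ms n \<subseteq> Ms k))"

definition maximal_families_wrt :: "'a \<Rightarrow> bool" where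
  "maximal_families_wrt s \<longleftrightarrow>
     (\<forall>F. F \<noteq> {} \<longrightarrow> (\<forall>N\<in>F. subspace N) \<longrightarrow>
        (\<exists>M0\<in>F. \<forall>N\<in>F. M0 \<subseteq> N \<longrightarrow> scale s ` N \<subseteq> M0))"

lemma stationary_chains_if_uniformly_fg:
  assumes "uniformly_fg_wrt s"
  shows "stationary_chains_wrt s"
  unfolding stationary_chains_wrt_def
proof (intro allI impI)
  fix Ms :: "nat \<Rightarrow> 'b set"
  assume sub: "\<forall>n. subspace (Ms n)" and "\<forall>n. Ms n \<subseteq> Ms (Suc n)"
  then have "mono Ms"
    by (simp add: mono_iff_le_Suc)
  have "subspace (\<Union>n. Ms n)"
    using subspace_UN_mono \<open>mono Ms\<close> sub by blast
  then obtain G where G: "finite G" "span G \<subseteq> (\<Union>n. Ms n)" "scale s ` (\<Union>n. Ms n) \<subseteq> span G"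
    using assms unfolding uniformly_fg_wrt_def by meson
  have "G \<subseteq> (\<Union>n. Ms n)"
    using span_superset G(2) by (rule order_trans)
  then obtain k where "G \<subseteq> Ms k"
    using finite_subset_UN_mono[OF \<open>mono Ms\<close> G(1)] by blast
  then have "span G \<subseteq> Ms k"
    using span_minimal sub by blast
  then have "scale s ` Ms n \<subseteq> Ms k" for n
    using G(3) by blast
  then show "\<exists>k. \<forall>n\<ge>k. scale s ` Ms n \<subseteq> Ms k"
    by blast
qed

lemma maximal_families_if_stationary_chains:
  assumes "stationary_chains_wrt s"
  shows "maximal_families_wrt s"
  unfolding maximal_families_wrt_def
proof (intro allI impI, rule ccontr)
  fix F
  assume "F \<noteq> {}" and sub: "\<forall>N\<in>F. subspace N"
    and no_max: "\<not> (\<exists>M0\<in>F. \<forall>N\<in>F. M0 \<subseteq> N \<longrightarrow> scale s ` N \<subseteq> M0)"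
  have step: "\<exists>N. N \<in> F \<and> M \<subseteq> N \<and> \<not> scale s ` N \<subseteq> M" if "M \<in> F" for M
    using no_max that by meson
  have "\<exists>Ms. \<forall>n. Ms n \<in> F \<and> Ms n \<subseteq> Ms (Suc n) \<and> \<not> scale s ` Ms (Suc n) \<subseteq> Ms n"
    by (rule dependent_nat_choice) (use \<open>F \<noteq> {}\<close> step in auto)
  then obtain Ms where Ms: "\<And>n. Ms n \<in> F \<and> Ms n \<subseteq> Ms (Suc n) \<and> \<not> scale s ` Ms (Suc n) \<subseteq> Ms n"
    by blast
  then have "\<forall>n. subspace (Ms n)" "\<forall>n. Ms n \<subseteq> Ms (Suc n)"
    using sub by blast+
  then obtain k where "\<forall>n\<ge>k. scale s ` Ms n \<subseteq> Ms k"
    using assms unfolding stationary_chains_wrt_def by meson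
  then have "scale s ` Ms (Suc k) \<subseteq> Ms k"
    by simp
  then show False
    using Ms[of k] by blast
qed

lemma uniformly_fg_if_maximal_families:
  assumes "maximal_families_wrt s"
  shows "uniformly_fg_wrt s"
  unfolding uniformly_fg_wrt_def
proof (intro allI impI)
  fix N
  assume N: "subspace N"
  define F where "F = span ` {G. finite G \<and> G \<subseteq> N}"
  have "F \<noteq> {}" "\<forall>X\<in>F. subspace X"
    unfolding F_def by auto
  then obtain M0 where "M0 \<in> F" and maximal: "\<forall>X\<in>F. M0 \<subseteq> X \<longrightarrow> scale s ` X \<subseteq> M0"
    using assms unfolding maximal_families_wrt_def by meson
  then obtain G0 where G0: "M0 = span G0" "finite G0" "G0 \<subseteq> N"
    unfolding F_def by blast
  have "s *s x \<in> span G0" if "x \<in> N" for x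
  proof -
    have "span (insert x G0) \<in> F"
      unfolding F_def using G0 that by auto
    moreover have "span G0 \<subseteq> span (insert x G0)"
      by (rule span_mono) blast
    ultimately have "scale s ` span (insert x G0) \<subseteq> span G0"
      using maximal G0(1) by blast
    then show ?thesis
      using span_base[of x "insert x G0"] by blast
  qed
  then show "\<exists>G. finite G \<and> span G \<subseteq> N \<and> scale s ` N \<subseteq> span G"
    using G0 span_minimal[OF G0(3) N] by blast
qed

end

theorem theorem2p8:
  fixes scale :: "'a::comm_ring_1 \<Rightarrow> 'b::ab_group_add \<Rightarrow> 'b"
    and S :: "'a set"
  assumes "module scale"
    and "mult_subset S"
  shows "(u_S_noetherian scale S \<longleftrightarrow> S_stationary_chains scale S)
       \<and> (S_stationary_chains scale S \<longleftrightarrow> S_maximal_families scale S)"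
proof -
  interpret module scale by fact
  have "u_S_noetherian scale S \<longleftrightarrow> (\<exists>s\<in>S. uniformly_fg_wrt s)"
    unfolding u_S_noetherian_def uniformly_fg_wrt_def ..
  moreover have "S_stationary_chains scale S \<longleftrightarrow> (\<exists>s\<in>S. stationary_chains_wrt s)"
    unfolding S_stationary_chains_def stationary_chains_wrt_def ..
  moreover have "S_maximal_families scale S \<longleftrightarrow> (\<exists>s\<in>S. maximal_families_wrt s)"
    unfolding S_maximal_families_def maximal_families_wrt_def ..
  ultimately show ?thesis
    using stationary_chains_if_uniformly_fg maximal_families_if_stationary_chains
      uniformly_fg_if_maximal_families by blast
qed

end
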